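(* Let $g$ be a positive integer; suppose that for some $l$ the set $S_l$ contains a consecutive prospective prime pair with gap $g$, and let $j>l+2$. Let $(a,a+g)$ be a consecutive prospective prime pair with gap $g$ in $S_j$. For $0\le m\le P_{j+1}-1$ put $(a_m,a_m+g)=(a+mP_j\#,\,a+g+mP_j\#)$, and call $m$ allowed if both $a_m$ and $a_m+g$ are coprime to $P_{j+1}\#$. Then for each allowed $m$ the pair $(a_m,a_m+g)$ lies in the subset $S_{j+1}^{(m)}$ (so distinct allowed $m$ give pairs in distinct subsets of $S_{j+1}$), and the number of allowed $m$ is $P_{j+1}-1$ if $P_{j+1}\mid g$ and $P_{j+1}-2$ if $P_{j+1}\nmid g$; i.e., the generated pairs occupy, one each, all but one subset of $S_{j+1}$ if $P_{j+1}\mid g$ and all but two subsets otherwise.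
   Context: $P_k$ denotes the $k$-th prime ($P_1=2$), $P_k\#=\prod_{i=1}^kP_i$. $S_k=\{N\in\mathbb{N}:5\le N\le4+P_k\#\}$ and $S_k^{(m)}=\{N:5+mP_{k-1}\#\le N\le 4+(m+1)P_{k-1}\#\}$ for $0\le m\le P_k-1$. A prospective prime in $S_k$ is an $N\in S_k$ coprime to $P_k\#$; prospective primes $a<b$ in $S_k$ are consecutive if no integer strictly between them is coprime to $P_k\#$; a consecutive prospective prime pair with gap $g$ is a pair $(a,a+g)$ of consecutive prospective primes. *)

theory Defs
  imports "HOL-Computational_Algebra.Primes" "HOL-Library.Infinite_Set"
begin

text \<open>P k = k-th prime, indexed from 1 (P 1 = 2).\<close>
definition P :: "nat \<Rightarrow> nat" where
  "P k = enumerate {p. prime p} (k - 1)"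

definition primorial :: "nat \<Rightarrow> nat" where
  "primorial k = (\<Prod>i\<in>{1..k}. P i)"

definition S :: "nat \<Rightarrow> nat set" where
  "S k = {5 .. 4 + primorial k}"

definition Ssub :: "nat \<Rightarrow> nat \<Rightarrow> nat set" where
  "Ssub k m = {5 + m * primorial (k - 1) .. 4 + (m + 1) * primorial (k - 1)}"

definition prospective :: "nat \<Rightarrow> nat \<Rightarrow> bool" where
  "prospective k N \<longleftrightarrow> N \<in> S k \<and> coprime N (primorial k)"

definition consecutive_pp :: "nat \<Rightarrow> nat \<Rightarrow> nat \<Rightarrow> bool" where
  "consecutive_pp k a b \<longleftrightarrow> prospective k a \<and> prospective k b \<and> a < b \<and>
     (\<forall>n. a < n \<and> n < b \<longrightarrow> \<not> coprime n (primorial k))"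

definition cpp_gap :: "nat \<Rightarrow> nat \<Rightarrow> nat \<Rightarrow> bool" where
  "cpp_gap k g a \<longleftrightarrow> consecutive_pp k a (a + g)"

end

theory Submission
  imports Defs "HOL-Number_Theory.Number_Theory"
begin

text \<open>Write \<open>p = P (j + 1)\<close> and \<open>Q = P_j#\<close>, so that \<open>P_{j+1}# = Q p\<close> with \<open>p\<close> prime to \<open>Q\<close>.
  Since \<open>a\<close> lies in \<open>S_j = [5, 4 + Q]\<close>, the shift \<open>a + m Q\<close> lies in \<open>S_{j+1}^(m)\<close> for every \<open>m\<close>.
  Shifting by multiples of \<open>Q\<close> preserves coprimality to \<open>Q\<close>, so \<open>a + m Q\<close> is coprime to
  \<open>P_{j+1}#\<close> iff \<open>p\<close> does not divide it. As \<open>m\<close> runs over \<open>0, \<dots>, p - 1\<close>, the residues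
  \<open>a + m Q mod p\<close> run over all of \<open>\<int>/p\<close>, so exactly one \<open>m\<close> is excluded by \<open>a\<close> and exactly
  one by \<open>a + g\<close>; the two coincide iff \<open>p dvd g\<close>.\<close>

lemma prime_P: "prime (P k)"
  unfolding P_def using enumerate_in_set[OF primes_infinite] by simp

lemma P_less: "1 \<le> i \<Longrightarrow> i < k \<Longrightarrow> P i < P k"
  unfolding P_def by (simp add: primes_infinite)

lemma primorial_Suc: "primorial (Suc j) = primorial j * P (Suc j)"
  unfolding primorial_def by (simp add: prod.nat_ivl_Suc' mult.commute)

lemma coprime_P_Suc_primorial: "coprime (P (Suc j)) (primorial j)"
  unfolding primorial_def
proof (rule prod_coprime_right)
  fix i assume "i \<in> {1..j}"
  then have "P i \<noteq> P (Suc j)" using P_less[of i "Suc j"] by auto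
  then show "coprime (P (Suc j)) (P i)" using primes_coprime prime_P by metis
qed

lemma add_mult_primorial_mem_Ssub:
  assumes "a \<in> S j"
  shows "a + m * primorial j \<in> Ssub (Suc j) m"
  using assms unfolding S_def Ssub_def by auto

lemma coprime_prime_right_iff:
  fixes p n :: nat
  assumes "prime p"
  shows "coprime n p \<longleftrightarrow> \<not> p dvd n"
  by (metis assms prime_imp_coprime_nat coprime_commute not_prime_unit coprime_absorb_left)

lemma coprime_add_mult_left_iff:
  fixes x m Q :: nat
  shows "coprime (x + m * Q) Q \<longleftrightarrow> coprime x Q"
  by (meson coprime_def dvd_add_left_iff dvd_mult)

lemma coprime_add_mult_times_prime_iff:
  fixes x m Q p :: nat
  assumes "prime p" "coprime x Q"
  shows "coprime (x + m * Q) (Q * p) \<longleftrightarrow> \<not> p dvd x + m * Q"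
  using assms by (simp add: coprime_add_mult_left_iff coprime_prime_right_iff)

lemma affine_root_mod_unique:
  fixes p Q c m1 m2 :: nat
  assumes "coprime p Q" "p dvd c + m1 * Q" "p dvd c + m2 * Q" "m1 < p" "m2 < p"
  shows "m1 = m2"
proof -
  have "[c + m1 * Q = c + m2 * Q] (mod p)"
    using assms(2,3) by (simp add: cong_def dvd_eq_mod_eq_0)
  then have "[m1 * Q = m2 * Q] (mod p)" by (simp add: cong_add_lcancel_nat)
  then have "[m1 = m2] (mod p)"
    using assms(1) cong_mult_rcancel_nat by (metis coprime_commute)
  then show ?thesis using assms(4,5) by (simp add: cong_def)
qed

lemma affine_root_mod_exists:
  fixes p Q c :: nat
  assumes "coprime p Q" "p > 0"
  obtains m where "m < p" "p dvd c + m * Q"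
proof -
  obtain x where x: "[Q * x = p - c mod p] (mod p)"
    using cong_solve_dvd_nat[of Q p] assms(1) by (auto simp: coprime_commute)
  have "[c + x mod p * Q = c mod p + (p - c mod p)] (mod p)"
    using x by (intro cong_add) (auto simp: cong_def mod_mult_right_eq mult.commute)
  also have "c mod p + (p - c mod p) = p"
    using assms(2) by simp
  finally show ?thesis
    using assms(2) by (intro that[of "x mod p"]) (auto simp: cong_def dvd_eq_mod_eq_0)
qed

lemma affine_roots_mod_singleton:
  fixes p Q c :: nat
  assumes "coprime p Q" "p > 0"
  obtains m where "m < p" "{m'. m' < p \<and> p dvd c + m' * Q} = {m}"
proof -
  obtain m where "m < p" "p dvd c + m * Q"
    using affine_root_mod_exists[OF assms] .
  with affine_root_mod_unique[OF assms(1)] show ?thesis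
    by (intro that[of m]) blast+
qed

lemma card_affine_pair_nonroots_mod:
  fixes p Q c g :: nat
  assumes "coprime p Q" "p > 0"
  shows "card {m. m < p \<and> \<not> p dvd c + m * Q \<and> \<not> p dvd c + g + m * Q}
           = (if p dvd g then p - 1 else p - 2)"
proof -
  obtain m0 where m0: "m0 < p" "{m. m < p \<and> p dvd c + m * Q} = {m0}"
    using affine_roots_mod_singleton[OF assms] .
  obtain m1 where m1: "m1 < p" "{m. m < p \<and> p dvd c + g + m * Q} = {m1}"
    using affine_roots_mod_singleton[OF assms] .
  have "{m. m < p \<and> \<not> p dvd c + m * Q \<and> \<not> p dvd c + g + m * Q} = {..<p} - {m0, m1}"
    using m0(2) m1(2) by blast
  moreover have "m0 = m1 \<longleftrightarrow> p dvd g"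
  proof -
    have "p dvd c + m0 * Q" using m0(2) by blast
    then have "p dvd c + g + m0 * Q \<longleftrightarrow> p dvd g"
      by (metis add.commute add.left_commute dvd_add_right_iff)
    then show ?thesis using m0(1) m1(2) by blast
  qed
  moreover have "card ({..<p} - {m0, m1}) = card {..<p} - card {m0, m1}"
    using m0(1) m1(1) by (intro card_Diff_subset) auto
  ultimately show ?thesis
    by (cases "m0 = m1") auto
qed

theorem lemma2:
  fixes g l j a :: nat
  assumes "g > 0"
    and "\<exists>a'. cpp_gap l g a'"
    and "j > l + 2"
    and "cpp_gap j g a"
  shows "(\<forall>m. m \<le> P (j + 1) - 1
              \<and> coprime (a + m * primorial j) (primorial (j + 1))
              \<and> coprime (a + g + m * primorial j) (primorial (j + 1))
            \<longrightarrow> a + m * primorial j \<in> Ssub (j + 1) m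
              \<and> a + g + m * primorial j \<in> Ssub (j + 1) m)
       \<and> card {m. m \<le> P (j + 1) - 1
              \<and> coprime (a + m * primorial j) (primorial (j + 1))
              \<and> coprime (a + g + m * primorial j) (primorial (j + 1))}
         = (if P (j + 1) dvd g then P (j + 1) - 1 else P (j + 1) - 2)"
proof -
  define p where "p = P (j + 1)"
  define Q where "Q = primorial j"
  have "prime p" unfolding p_def by (rule prime_P)
  then have "p > 0" by (rule prime_gt_0_nat)
  have "coprime p Q" unfolding p_def Q_def by (simp add: coprime_P_Suc_primorial)
  have primorial: "primorial (j + 1) = Q * p" unfolding p_def Q_def by (simp add: primorial_Suc)
  from assms(4) have a: "a \<in> S j" "a + g \<in> S j" "coprime a Q" "coprime (a + g) Q"
    unfolding cpp_gap_def consecutive_pp_def prospective_def Q_def by auto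
  have "{m. m \<le> P (j + 1) - 1
            \<and> coprime (a + m * primorial j) (primorial (j + 1))
            \<and> coprime (a + g + m * primorial j) (primorial (j + 1))}
        = {m. m < p \<and> \<not> p dvd a + m * Q \<and> \<not> p dvd a + g + m * Q}"
    unfolding primorial Q_def[symmetric] p_def[symmetric]
      coprime_add_mult_times_prime_iff[OF \<open>prime p\<close> a(3)]
      coprime_add_mult_times_prime_iff[OF \<open>prime p\<close> a(4)]
    using \<open>p > 0\<close> by auto
  then show ?thesis
    using card_affine_pair_nonroots_mod[OF \<open>coprime p Q\<close> \<open>p > 0\<close>]
      add_mult_primorial_mem_Ssub[OF a(1)] add_mult_primorial_mem_Ssub[OF a(2)]
    by (simp add: p_def Q_def)
qed

end
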